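(* Let $P\subset\mathbb{R}^2$ be a finite point set of size $n$ satisfying the standing condition, let $X\subseteq P$ be its set of extreme points (given as input), and let $\varepsilon\in(0,1)$. The algorithm E-GRMR described in the context runs in $O(n^3)$ time.
   Context: For finite $Q \subset \mathbb{R}^2$ and unit $x$, $\omega(x,Q)=\max_{p\in Q}\langle p,x\rangle$. Standing condition: $\omega(x,P)>0$ for all $x\in\mathbb{S}^1$. Extreme points $X=\{t_1,\dots,t_m\}$ are the vertices of the convex hull of $P$ (the points that are top-ranked, $\langle p,x\rangle = \omega(x,P)$, for some nonzero $x$), indexed counterclockwise by polar angle, cyclically. Algorithm E-GRMR on input $(P,X,\varepsilon)$: (1) For each $i$, compute the unit vector $x^*_i$ with $\langle t_i,x\rangle=\langle t_{i+1},x\rangle$, $\langle t_i,x\rangle>0$; set $S=X$ and add to $S$ each $p\in P\setminus X$ for which some $i$ has $\langle p,x^*_i\rangle\ge(1-\varepsilon)\langle t_i,x^*_i\rangle$; index $S$ as $s_1,\dots,s_{|S|}$ counterclockwise by polar angle. (2) Build a directed graph $G$ on vertex set $S$: for each ordered pair $i\neq j$, skip if the counterclockwise angle from $s_i$ to $s_j$ is at least $\pi$; otherwise compute $l_{ij}=\max_{t\in X[s_i,s_j]}(1-\langle s_i,x^*\rangle/\langle t,x^*\rangle)$ (taken as $0$ if $X[s_i,s_j]$ is empty), where $X[s_i,s_j]$ is the set of extreme points with polar angle in the counterclockwise range from $s_i$ to $s_j$ inclusive and $x^*$ is the unit vector with $\langle s_i,x^*\rangle=\langle s_j,x^*\rangle$,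 $\langle s_i,x^*\rangle\ge0$; add edge $s_i\to s_j$ if $l_{ij}\le\varepsilon$. (3) Find a shortest directed cycle $C^*$ of $G$ by running Dijkstra's algorithm from each vertex, and return its vertex set. *)

theory Defs
  imports "HOL-Analysis.Analysis" "HOL-Library.Monad_Syntax"
begin

section \<open>Geometry (points of R^2 represented as complex numbers; inner product is \<bullet>)\<close>

definition omega :: "complex \<Rightarrow> complex set \<Rightarrow> real" where
  "omega x Q = Max ((\<lambda>p. p \<bullet> x) ` Q)"

definition standing_condition :: "complex set \<Rightarrow> bool" where
  "standing_condition P \<longleftrightarrow> (\<forall>x. norm x = 1 \<longrightarrow> omega x P > 0)"

definition polar :: "complex \<Rightarrow> real" where
  "polar p = Arg2pi p"

definition ccw_angle :: "complex \<Rightarrow> complex \<Rightarrow> real" where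
  "ccw_angle a b = Arg2pi (b / a)"

definition perp_unit :: "complex \<Rightarrow> complex \<Rightarrow> complex" where
  "perp_unit a b = \<i> * (b - a) / complex_of_real (cmod (b - a))"

definition xstar_strict :: "complex \<Rightarrow> complex \<Rightarrow> complex" where
  "xstar_strict a b = (let u = perp_unit a b in if a \<bullet> u > 0 then u else - u)"

definition xstar_weak :: "complex \<Rightarrow> complex \<Rightarrow> complex" where
  "xstar_weak a b = (let u = perp_unit a b in if a \<bullet> u \<ge> 0 then u else - u)"

text \<open>A computation returns a value together with the number of elementary steps used.
  prim v is one elementary (constant-size) operation producing v (an arithmetic /
  comparison / sqrt / arg evaluation, or one array read or write); every loop
  iteration additionally costs one step.\<close>

type_synonym 'a tm = "'a \<times> nat"

definition ret :: "'a \<Rightarrow> 'a tm" where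
  "ret x = (x, 0)"

definition prim :: "'a \<Rightarrow> 'a tm" where
  "prim x = (x, 1)"

definition tbind :: "'a tm \<Rightarrow> ('a \<Rightarrow> 'b tm) \<Rightarrow> 'b tm" where
  "tbind m f = (case m of (x, c) \<Rightarrow> (case f x of (y, d) \<Rightarrow> (y, c + d)))"

adhoc_overloading Monad_Syntax.bind \<rightleftharpoons> tbind

fun foldM :: "('b \<Rightarrow> 'a \<Rightarrow> 'b tm) \<Rightarrow> 'a list \<Rightarrow> 'b \<Rightarrow> 'b tm" where
  "foldM f [] b = ret b"
| "foldM f (x # xs) b = do { b' \<leftarrow> f b x; b'' \<leftarrow> prim b'; foldM f xs b'' }"

definition forM :: "('a \<Rightarrow> 'b tm) \<Rightarrow> 'a list \<Rightarrow> 'b list tm" where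
  "forM f xs = foldM (\<lambda>acc x. do { y \<leftarrow> f x; ret (acc @ [y]) }) xs []"

definition anyM :: "('a \<Rightarrow> bool tm) \<Rightarrow> 'a list \<Rightarrow> bool tm" where
  "anyM p xs = foldM (\<lambda>b x. if b then ret True else p x) xs False"

fun ins_tm :: "('a \<Rightarrow> real) \<Rightarrow> 'a \<Rightarrow> 'a list \<Rightarrow> 'a list tm" where
  "ins_tm k x [] = ret [x]"
| "ins_tm k x (y # ys) = do {
      b \<leftarrow> prim (k x \<le> k y);
      if b then ret (x # y # ys) else do { r \<leftarrow> ins_tm k x ys; ret (y # r) } }"

definition sort_tm :: "('a \<Rightarrow> real) \<Rightarrow> 'a list \<Rightarrow> 'a list tm" where
  "sort_tm k xs = foldM (\<lambda>acc x. ins_tm k x acc) xs []"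

text \<open>Step (1): returns the extreme points sorted counterclockwise (T) and the
  candidate set S sorted counterclockwise.\<close>
definition step1 :: "complex list \<Rightarrow> complex list \<Rightarrow> real \<Rightarrow> (complex list \<times> complex list) tm" where
  "step1 P X eps = do {
     T \<leftarrow> sort_tm polar X;
     let m = length T;
     xs \<leftarrow> forM (\<lambda>i. prim (xstar_strict (T ! i) (T ! ((i + 1) mod m)))) [0..<m];
     extra \<leftarrow> foldM (\<lambda>acc p. do {
                 inX \<leftarrow> anyM (\<lambda>t. prim (t = p)) T;
                 if inX then ret acc else do {
                   close \<leftarrow> anyM (\<lambda>i. prim (p \<bullet> (xs ! i) \<ge> (1 - eps) * ((T ! i) \<bullet> (xs ! i)))) [0..<m];
                   ret (if close then acc @ [p] else acc) } }) P [];
     S \<leftarrow> sort_tm polar (T @ extra);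
     ret (T, S) }"

text \<open>The quantity l_ij for s_i = a, s_j = b (0 if X[a,b] is empty).\<close>
definition lval_tm :: "complex list \<Rightarrow> complex \<Rightarrow> complex \<Rightarrow> real tm" where
  "lval_tm T a b = do {
     xst \<leftarrow> prim (xstar_weak a b);
     r \<leftarrow> foldM (\<lambda>acc t. do {
             inR \<leftarrow> prim (ccw_angle a t \<le> ccw_angle a b);
             if inR then prim (Some (case acc of
                                  None \<Rightarrow> 1 - (a \<bullet> xst) / (t \<bullet> xst)
                                | Some v \<Rightarrow> max v (1 - (a \<bullet> xst) / (t \<bullet> xst))))
             else ret acc }) T None;
     ret (case r of None \<Rightarrow> 0 | Some v \<Rightarrow> v) }"

definition edge_tm :: "complex list \<Rightarrow> complex list \<Rightarrow> real \<Rightarrow> nat \<Rightarrow> nat \<Rightarrow> bool tm" where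
  "edge_tm T S eps i j = do {
     same \<leftarrow> prim (i = j);
     if same then ret False else do {
       skip \<leftarrow> prim (ccw_angle (S ! i) (S ! j) \<ge> pi);
       if skip then ret False else do {
         l \<leftarrow> lval_tm T (S ! i) (S ! j);
         prim (l \<le> eps) } } }"

definition dijkstra_tm :: "bool list list \<Rightarrow> nat \<Rightarrow> nat \<Rightarrow> (nat option list \<times> nat list) tm" where
  "dijkstra_tm adj k s = do {
     dist0 \<leftarrow> forM (\<lambda>v. prim (if v = s then Some 0 else None)) [0..<k];
     pred0 \<leftarrow> forM (\<lambda>v. prim s) [0..<k];
     vis0 \<leftarrow> forM (\<lambda>v. prim False) [0..<k];
     (dist, pred, vis) \<leftarrow> foldM (\<lambda>(dist, pred, vis) _. do {
         u \<leftarrow> foldM (\<lambda>best v. prim (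
                  if \<not> vis ! v \<and> dist ! v \<noteq> None \<and>
                     (case best of None \<Rightarrow> True | Some w \<Rightarrow> the (dist ! v) < the (dist ! w))
                  then Some v else best)) [0..<k] None;
         (case u of
            None \<Rightarrow> ret (dist, pred, vis)
          | Some u \<Rightarrow> do {
              vis' \<leftarrow> prim (vis[u := True]);
              (dist', pred') \<leftarrow> foldM (\<lambda>(d, pr) v. prim (
                   if adj ! u ! v \<and> \<not> vis' ! v \<and>
                      (case d ! v of None \<Rightarrow> True | Some dv \<Rightarrow> the (d ! u) + 1 < dv)
                   then (d[v := Some (the (d ! u) + 1)], pr[v := u]) else (d, pr))) [0..<k] (dist, pred);
              ret (dist', pred', vis') }) }) [0..<k] (dist0, pred0, vis0);
     ret (dist, pred) }"

text \<open>Step (3): a shortest directed cycle (fewest edges), via Dijkstra from every vertex;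
  returns its vertex indices (empty list if the graph is acyclic).\<close>
definition cycle_tm :: "bool list list \<Rightarrow> nat \<Rightarrow> nat list tm" where
  "cycle_tm adj k = do {
     best \<leftarrow> foldM (\<lambda>best s. do {
                (dist, pred) \<leftarrow> dijkstra_tm adj k s;
                foldM (\<lambda>b v. prim (case dist ! v of
                           None \<Rightarrow> b
                         | Some d \<Rightarrow> if adj ! v ! s \<and> (case b of None \<Rightarrow> True | Some (L, _, _) \<Rightarrow> d + 1 < L)
                                     then Some (d + 1, s, v) else b)) [0..<k] best }) [0..<k] None;
     (case best of
        None \<Rightarrow> ret []
      | Some (L, s, v) \<Rightarrow> do {
          (dist, pred) \<leftarrow> dijkstra_tm adj k s;
          (_, path) \<leftarrow> foldM (\<lambda>(cur, acc) _. prim (pred ! cur, pred ! cur # acc)) [0..<L - 1] (v, [v]);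
          ret path }) }"

definition egrmr :: "complex list \<Rightarrow> complex list \<Rightarrow> real \<Rightarrow> complex list tm" where
  "egrmr P X eps = do {
     (T, S) \<leftarrow> step1 P X eps;
     let k = length S;
     adj \<leftarrow> forM (\<lambda>i. forM (\<lambda>j. edge_tm T S eps i j) [0..<k]) [0..<k];
     C \<leftarrow> cycle_tm adj k;
     forM (\<lambda>i. prim (S ! i)) C }"

definition egrmr_cost :: "complex list \<Rightarrow> complex list \<Rightarrow> real \<Rightarrow> nat" where
  "egrmr_cost P X eps = snd (egrmr P X eps)"

end

theory Submission
  imports Defs
begin

(* Every loop of E-GRMR ranges over a list of length at most N = |X| + |P| <= 2n: both sorts are
   insertion sorts (O(N^2)), step (1) tests each point against the m hull edges, step (2) evaluates
   each l_ij in time O(m) for the N^2 ordered pairs, and step (3) runs an O(N^2) array Dijkstra from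
   each of the N vertices. The only loop whose length depends on the data is the walk back along
   the predecessor array; it has at most N steps because, with unit weights, every finite tentative
   distance is at most the number of rounds performed. In total the cost is at most
   7N^3 + 25N^2 + 21N <= 53N^3. *)

lemma tbind_eq [simp]: "tbind m f = (fst (f (fst m)), snd m + snd (f (fst m)))"
  by (cases m; cases "f (fst m)") (auto simp: tbind_def)

lemma fst_ret [simp]: "fst (ret x) = x" and snd_ret [simp]: "snd (ret x) = 0"
  by (auto simp: ret_def)

lemma fst_prim [simp]: "fst (prim x) = x" and snd_prim [simp]: "snd (prim x) = 1"
  by (auto simp: prim_def)

lemma snd_foldM_le:
  assumes "\<And>b x. x \<in> set xs \<Longrightarrow> snd (f b x) \<le> c"
  shows "snd (foldM f xs b) \<le> length xs * (c + 1)"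
  using assms
proof (induction xs arbitrary: b)
  case (Cons x xs)
  have "snd (f b x) \<le> c" and "snd (foldM f xs (fst (f b x))) \<le> length xs * (c + 1)"
    using Cons by simp_all
  then show ?case by simp
qed simp

lemma foldM_invariant:
  assumes "I b i" and "\<And>b x i. I b i \<Longrightarrow> x \<in> set xs \<Longrightarrow> I (fst (f b x)) (Suc i)"
  shows "I (fst (foldM f xs b)) (i + length xs)"
  using assms
proof (induction xs arbitrary: b i)
  case (Cons x xs)
  have "I (fst (foldM f xs (fst (f b x)))) (Suc i + length xs)"
    using Cons by (intro Cons.IH) auto
  then show ?case by simp
qed simp

lemma foldM_preserves:
  assumes "I b" and "\<And>b x. I b \<Longrightarrow> x \<in> set xs \<Longrightarrow> I (fst (f b x))"
  shows "I (fst (foldM f xs b))"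
  using foldM_invariant[where I = "\<lambda>b i. I b" and i = 0] assms by blast

lemma fst_forM [simp]: "fst (forM f xs) = map (\<lambda>x. fst (f x)) xs"
proof -
  have "fst (foldM (\<lambda>acc x. do { y \<leftarrow> f x; ret (acc @ [y]) }) xs acc) = acc @ map (\<lambda>x. fst (f x)) xs"
    for acc by (induction xs arbitrary: acc) auto
  then show ?thesis unfolding forM_def by simp
qed

lemma snd_forM_le: "(\<And>x. x \<in> set xs \<Longrightarrow> snd (f x) \<le> c) \<Longrightarrow> snd (forM f xs) \<le> length xs * (c + 1)"
  unfolding forM_def by (rule snd_foldM_le) auto

lemma snd_anyM_le: "(\<And>x. x \<in> set xs \<Longrightarrow> snd (p x) \<le> c) \<Longrightarrow> snd (anyM p xs) \<le> length xs * (c + 1)"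
  unfolding anyM_def by (rule snd_foldM_le) auto

lemma ins_tm_length_cost:
  "length (fst (ins_tm k x ys)) = Suc (length ys) \<and> snd (ins_tm k x ys) \<le> length ys"
  by (induction ys) auto

lemma sort_tm_length_cost:
  "length (fst (sort_tm k xs)) = length xs \<and> snd (sort_tm k xs) \<le> length xs * (length xs + 1)"
proof -
  have "length (fst (foldM (\<lambda>acc x. ins_tm k x acc) xs acc)) = length acc + length xs \<and>
    snd (foldM (\<lambda>acc x. ins_tm k x acc) xs acc) \<le> length xs * (length xs + length acc + 1)" for acc
  proof (induction xs arbitrary: acc)
    case (Cons x xs)
    then show ?case
      using ins_tm_length_cost[of k x acc] Cons.IH[of "fst (ins_tm k x acc)"] by (simp add: algebra_simps)
  qed simp
  from this[of "[]"] show ?thesis unfolding sort_tm_def by simp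
qed

definition candidate_step :: "complex list \<Rightarrow> complex list \<Rightarrow> real \<Rightarrow> complex list \<Rightarrow> complex \<Rightarrow> complex list tm" where
  "candidate_step T xs eps = (\<lambda>acc p. do {
     inX \<leftarrow> anyM (\<lambda>t. prim (t = p)) T;
     if inX then ret acc else do {
       close \<leftarrow> anyM (\<lambda>i. prim (p \<bullet> (xs ! i) \<ge> (1 - eps) * ((T ! i) \<bullet> (xs ! i)))) [0..<length T];
       ret (if close then acc @ [p] else acc) } })"

lemma step1_unfold: "step1 P X eps = do {
     T \<leftarrow> sort_tm polar X;
     xs \<leftarrow> forM (\<lambda>i. prim (xstar_strict (T ! i) (T ! ((i + 1) mod length T)))) [0..<length T];
     extra \<leftarrow> foldM (candidate_step T xs eps) P [];
     S \<leftarrow> sort_tm polar (T @ extra);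
     ret (T, S) }"
  unfolding step1_def candidate_step_def Let_def by (rule refl)

lemma snd_candidate_step_le: "snd (candidate_step T xs eps acc p) \<le> 4 * length T"
proof -
  have "snd (anyM (\<lambda>t. prim (t = p)) T) \<le> length T * (1 + 1)"
    by (rule snd_anyM_le) simp
  moreover have "snd (anyM (\<lambda>i. prim (p \<bullet> (xs ! i) \<ge> (1 - eps) * ((T ! i) \<bullet> (xs ! i)))) [0..<length T])
      \<le> length [0..<length T] * (1 + 1)"
    by (rule snd_anyM_le) simp
  ultimately show ?thesis unfolding candidate_step_def by simp
qed

lemma length_candidate_step_le: "length (fst (candidate_step T xs eps acc p)) \<le> Suc (length acc)"
  unfolding candidate_step_def by simp

lemma length_candidates_le: "length (fst (foldM (candidate_step T xs eps) P [])) \<le> length P"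
proof -
  have "(\<lambda>acc i. length acc \<le> i) (fst (foldM (candidate_step T xs eps) P [])) (0 + length P)"
  proof (rule foldM_invariant)
    fix acc p i
    assume "length (acc :: complex list) \<le> i"
    then show "length (fst (candidate_step T xs eps acc p)) \<le> Suc i"
      using length_candidate_step_le[of T xs eps acc p] by linarith
  qed simp
  then show ?thesis by simp
qed

lemma step1_length_cost:
  fixes P X :: "complex list"
  defines "N \<equiv> length X + length P"
  shows "length (fst (fst (step1 P X eps))) = length X"
    and "length (snd (fst (step1 P X eps))) \<le> N"
    and "snd (step1 P X eps) \<le> N * (6 * N + 5)"
proof -
  define T where "T = fst (sort_tm polar X)"
  define f where "f = (\<lambda>i. prim (xstar_strict (T ! i) (T ! ((i + 1) mod length T))))"
  define xs where "xs = fst (forM f [0..<length T])"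
  define E where "E = fst (foldM (candidate_step T xs eps) P [])"
  have result: "fst (step1 P X eps) = (T, fst (sort_tm polar (T @ E)))"
    and cost: "snd (step1 P X eps) = snd (sort_tm polar X) + snd (forM f [0..<length T])
      + snd (foldM (candidate_step T xs eps) P []) + snd (sort_tm polar (T @ E))"
    unfolding step1_unfold
    by (simp_all only: tbind_eq fst_conv snd_conv fst_ret snd_ret add_0_right add.assoc
        flip: T_def f_def xs_def E_def)
  have T: "length T = length X" "snd (sort_tm polar X) \<le> length X * (length X + 1)"
    using sort_tm_length_cost[of polar X] by (auto simp: T_def)
  have xs: "snd (forM f [0..<length T]) \<le> length T * (1 + 1)"
    using snd_forM_le[of "[0..<length T]" f 1] by (simp add: f_def)
  have "snd (foldM (candidate_step T xs eps) P []) \<le> length P * (4 * length T + 1)"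
    by (rule snd_foldM_le, rule snd_candidate_step_le)
  then have E: "length E \<le> length P" "snd (foldM (candidate_step T xs eps) P []) \<le> length P * (4 * length X + 1)"
    using length_candidates_le T(1) by (simp_all add: E_def)
  have TE: "length (T @ E) \<le> N" using T E by (simp add: N_def)
  moreover have "length (T @ E) * (length (T @ E) + 1) \<le> N * (N + 1)"
    using TE by (intro mult_le_mono) simp_all
  ultimately have S: "length (fst (sort_tm polar (T @ E))) \<le> N" "snd (sort_tm polar (T @ E)) \<le> N * (N + 1)"
    using sort_tm_length_cost[of polar "T @ E"] by linarith+
  have "length X * (length X + 1) \<le> N * (N + 1)" "length X * 2 \<le> N * 2"
    "length P * (4 * length X + 1) \<le> N * (4 * N + 1)"
    unfolding N_def by (intro mult_le_mono; simp)+
  then show "snd (step1 P X eps) \<le> N * (6 * N + 5)"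
    using T xs E S unfolding cost by (simp add: algebra_simps)
  show "length (fst (fst (step1 P X eps))) = length X" "length (snd (fst (step1 P X eps))) \<le> N"
    using result T S by simp_all
qed

lemma snd_lval_tm_le: "snd (lval_tm T a b) \<le> 3 * length T + 1"
  unfolding lval_tm_def by (simp, rule order_trans[OF snd_foldM_le[where c = 2]]) auto

lemma snd_edge_tm_le: "snd (edge_tm T S eps i j) \<le> 3 * length T + 4"
  using snd_lval_tm_le[of T "S ! i" "S ! j"] unfolding edge_tm_def by auto

definition select_step :: "bool list \<Rightarrow> nat option list \<Rightarrow> nat option \<Rightarrow> nat \<Rightarrow> nat option tm" where
  "select_step vis d = (\<lambda>best v. prim (
     if \<not> vis ! v \<and> d ! v \<noteq> None \<and>
        (case best of None \<Rightarrow> True | Some w \<Rightarrow> the (d ! v) < the (d ! w))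
     then Some v else best))"

definition relax_step :: "bool list list \<Rightarrow> nat \<Rightarrow> bool list \<Rightarrow> nat option list \<times> nat list \<Rightarrow> nat
    \<Rightarrow> (nat option list \<times> nat list) tm" where
  "relax_step adj u vis = (\<lambda>(d, pr) v. prim (
     if adj ! u ! v \<and> \<not> vis ! v \<and>
        (case d ! v of None \<Rightarrow> True | Some dv \<Rightarrow> the (d ! u) + 1 < dv)
     then (d[v := Some (the (d ! u) + 1)], pr[v := u]) else (d, pr)))"

definition dijkstra_round :: "bool list list \<Rightarrow> nat \<Rightarrow> nat option list \<times> nat list \<times> bool list \<Rightarrow> nat
    \<Rightarrow> (nat option list \<times> nat list \<times> bool list) tm" where
  "dijkstra_round adj k = (\<lambda>(dist, pred, vis) _. do {
     u \<leftarrow> foldM (select_step vis dist) [0..<k] None;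
     (case u of
        None \<Rightarrow> ret (dist, pred, vis)
      | Some u \<Rightarrow> do {
          vis' \<leftarrow> prim (vis[u := True]);
          (dist', pred') \<leftarrow> foldM (relax_step adj u vis') [0..<k] (dist, pred);
          ret (dist', pred', vis') }) })"

lemma dijkstra_tm_unfold: "dijkstra_tm adj k s = do {
     dist0 \<leftarrow> forM (\<lambda>v. prim (if v = s then Some 0 else None)) [0..<k];
     pred0 \<leftarrow> forM (\<lambda>v. prim s) [0..<k];
     vis0 \<leftarrow> forM (\<lambda>v. prim False) [0..<k];
     (dist, pred, vis) \<leftarrow> foldM (dijkstra_round adj k) [0..<k] (dist0, pred0, vis0);
     ret (dist, pred) }"
  unfolding dijkstra_tm_def dijkstra_round_def select_step_def relax_step_def by (rule refl)

lemma snd_dijkstra_round_le: "snd (dijkstra_round adj k st x) \<le> 4 * k + 1"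
proof -
  obtain d pred vis where st: "st = (d, pred, vis)" by (cases st)
  have select: "snd (foldM (select_step vis d) [0..<k] None) \<le> 2 * k"
    using snd_foldM_le[of "[0..<k]" "select_step vis d" 1 None] by (simp add: select_step_def)
  have relax: "snd (foldM (relax_step adj u vis') [0..<k] dp) \<le> 2 * k" for u vis' dp
    using snd_foldM_le[of "[0..<k]" "relax_step adj u vis'" 1 dp] by (simp add: relax_step_def split_beta)
  show ?thesis
  proof (cases "fst (foldM (select_step vis d) [0..<k] None)")
    case None
    then show ?thesis using select unfolding dijkstra_round_def st by simp
  next
    case (Some u)
    then show ?thesis
      using select relax[of u "vis[u := True]" "(d, pred)"] unfolding dijkstra_round_def st by (simp add: split_beta)
  qed
qed

lemma snd_dijkstra_tm_le: "snd (dijkstra_tm adj k s) \<le> k * (4 * k + 8)"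
proof -
  have init: "snd (forM (\<lambda>v. prim (f v)) [0..<k]) \<le> 2 * k" for f :: "nat \<Rightarrow> 'a"
    using snd_forM_le[of "[0..<k]" "\<lambda>v. prim (f v)" 1] by simp
  have rounds: "snd (foldM (dijkstra_round adj k) [0..<k] st) \<le> k * (4 * k + 2)" for st
    using snd_foldM_le[of "[0..<k]" "dijkstra_round adj k" "4 * k + 1" st] snd_dijkstra_round_le by simp
  show ?thesis
    unfolding dijkstra_tm_unfold
    using init[of "\<lambda>v. if v = s then Some (0::nat) else None"] init[of "\<lambda>v. s"] init[of "\<lambda>v. False"]
      rounds[of "(map (\<lambda>v. if v = s then Some 0 else None) [0..<k], map (\<lambda>v. s) [0..<k], map (\<lambda>v. False) [0..<k])"]
    by (simp add: split_beta algebra_simps)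
qed

definition dists_le :: "nat option list \<Rightarrow> nat \<Rightarrow> bool" where
  "dists_le d B \<longleftrightarrow> (\<forall>y. Some y \<in> set d \<longrightarrow> y \<le> B)"

lemma dists_le_nth: "dists_le d B \<Longrightarrow> v < length d \<Longrightarrow> d ! v = Some y \<Longrightarrow> y \<le> B"
  unfolding dists_le_def by (metis nth_mem)

lemma dists_le_mono: "dists_le d B \<Longrightarrow> B \<le> B' \<Longrightarrow> dists_le d B'"
  unfolding dists_le_def by force

lemma dists_le_update: "dists_le d B \<Longrightarrow> y \<le> B \<Longrightarrow> dists_le (d[v := Some y]) B"
  unfolding dists_le_def using set_update_subset_insert[of d v "Some y"] by fastforce

lemma select_step_result:
  assumes "fst (foldM (select_step vis d) [0..<k] None) = Some u"
  shows "u < k \<and> d ! u \<noteq> None"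
proof -
  have "(\<lambda>b. \<forall>u. b = Some u \<longrightarrow> u < k \<and> d ! u \<noteq> None) (fst (foldM (select_step vis d) [0..<k] None))"
    by (rule foldM_preserves) (auto simp: select_step_def)
  then show ?thesis using assms by simp
qed

text \<open>The relaxation loop never changes the distance of the vertex u it relaxes from: updating
  entry u would require d u + 1 < d u.\<close>
lemma relax_step_dists_le:
  assumes "u < length d" and "d ! u = Some du" and "du < B" and "dists_le d B"
  shows "length (fst (fst (foldM (relax_step adj u vis) vs (d, pr)))) = length d \<and>
    dists_le (fst (fst (foldM (relax_step adj u vis) vs (d, pr)))) B"
proof -
  let ?I = "\<lambda>(e :: nat option list, _ :: nat list). length e = length d \<and> e ! u = Some du \<and> dists_le e B"
  have "?I (fst (foldM (relax_step adj u vis) vs (d, pr)))"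
  proof (rule foldM_preserves)
    fix st v
    assume I: "?I st"
    obtain e p where st: "st = (e, p)" by (cases st)
    with I have e: "length e = length d" "e ! u = Some du" "dists_le e B" by auto
    then have eu: "the (e ! u) = du" by simp
    show "?I (fst (relax_step adj u vis st v))"
    proof (cases "adj ! u ! v \<and> \<not> vis ! v \<and> (case e ! v of None \<Rightarrow> True | Some dv \<Rightarrow> du + 1 < dv)")
      case True
      then have "v \<noteq> u" using e(2) by auto
      moreover have "dists_le (e[v := Some (du + 1)]) B" using e(3) assms(3) by (simp add: dists_le_update)
      ultimately show ?thesis using True e unfolding relax_step_def st by (auto simp: eu cong: option.case_cong)
    next
      case False
      then show ?thesis using e unfolding relax_step_def st by (auto simp: eu cong: option.case_cong)
    qed
  qed (use assms in simp)
  then show ?thesis by (simp add: split_beta)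
qed

lemma dijkstra_tm_dists_le:
  "length (fst (fst (dijkstra_tm adj k s))) = k \<and> dists_le (fst (fst (dijkstra_tm adj k s))) k"
proof -
  let ?I = "\<lambda>(d :: nat option list, _ :: nat list, _ :: bool list) i. length d = k \<and> dists_le d i"
  let ?d0 = "map (\<lambda>v. if v = s then Some (0::nat) else None) [0..<k]"
  have "?I (fst (foldM (dijkstra_round adj k) [0..<k] (?d0, pr, vis))) (0 + length [0..<k])" for pr vis
  proof (rule foldM_invariant)
    show "?I (?d0, pr, vis) 0" by (auto simp: dists_le_def)
  next
    fix st x i
    assume I: "?I st i"
    obtain d p vs where st: "st = (d, p, vs)" by (cases st)
    with I have d: "length d = k" "dists_le d i" by auto
    show "?I (fst (dijkstra_round adj k st x)) (Suc i)"
    proof (cases "fst (foldM (select_step vs d) [0..<k] None)")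
      case None
      then show ?thesis using d dists_le_mono[OF d(2)] unfolding dijkstra_round_def st by simp
    next
      case (Some u)
      with select_step_result obtain du where u: "u < k" "d ! u = Some du" by blast
      then have "du < Suc i" using dists_le_nth[OF d(2)] d(1) by fastforce
      then show ?thesis
        using relax_step_dists_le[of u d du "Suc i" adj "vs[u := True]" "[0..<k]" p] u d Some
          dists_le_mono[OF d(2), of "Suc i"]
        unfolding dijkstra_round_def st by (simp add: split_beta)
    qed
  qed
  then show ?thesis unfolding dijkstra_tm_unfold by (simp add: split_beta)
qed

definition close_cycle_step :: "bool list list \<Rightarrow> nat \<Rightarrow> nat option list \<Rightarrow> (nat \<times> nat \<times> nat) option \<Rightarrow> nat
    \<Rightarrow> (nat \<times> nat \<times> nat) option tm" where
  "close_cycle_step adj s d = (\<lambda>b v. prim (case d ! v of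
     None \<Rightarrow> b
   | Some dv \<Rightarrow> if adj ! v ! s \<and> (case b of None \<Rightarrow> True | Some (L, _, _) \<Rightarrow> dv + 1 < L)
               then Some (dv + 1, s, v) else b))"

definition cycle_search_step :: "bool list list \<Rightarrow> nat \<Rightarrow> (nat \<times> nat \<times> nat) option \<Rightarrow> nat
    \<Rightarrow> (nat \<times> nat \<times> nat) option tm" where
  "cycle_search_step adj k = (\<lambda>best s. do {
     (d, pred) \<leftarrow> dijkstra_tm adj k s;
     foldM (close_cycle_step adj s d) [0..<k] best })"

definition trace_back_step :: "nat list \<Rightarrow> nat \<times> nat list \<Rightarrow> nat \<Rightarrow> (nat \<times> nat list) tm" where
  "trace_back_step pred = (\<lambda>(cur, acc) _. prim (pred ! cur, pred ! cur # acc))"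

lemma cycle_tm_unfold: "cycle_tm adj k = do {
     best \<leftarrow> foldM (cycle_search_step adj k) [0..<k] None;
     (case best of
        None \<Rightarrow> ret []
      | Some (L, s, v) \<Rightarrow> do {
          (d, pred) \<leftarrow> dijkstra_tm adj k s;
          (_, path) \<leftarrow> foldM (trace_back_step pred) [0..<L - 1] (v, [v]);
          ret path }) }"
  unfolding cycle_tm_def cycle_search_step_def close_cycle_step_def trace_back_step_def by (rule refl)

lemma snd_cycle_search_step_le: "snd (cycle_search_step adj k b s) \<le> k * (4 * k + 10)"
proof -
  have close: "snd (foldM (close_cycle_step adj s d) [0..<k] b) \<le> 2 * k" for d
    using snd_foldM_le[of "[0..<k]" "close_cycle_step adj s d" 1 b] by (simp add: close_cycle_step_def)
  show ?thesis
    using snd_dijkstra_tm_le[of adj k s] close[of "fst (fst (dijkstra_tm adj k s))"] unfolding cycle_search_step_def by (simp add: split_beta algebra_simps)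
qed

lemma cycle_search_result:
  assumes "fst (foldM (cycle_search_step adj k) [0..<k] None) = Some (L, s, v)"
  shows "v < k \<and> L \<le> k + 1"
proof -
  let ?J = "\<lambda>b :: (nat \<times> nat \<times> nat) option. \<forall>L s v. b = Some (L, s, v) \<longrightarrow> v < k \<and> L \<le> k + 1"
  have "?J (fst (foldM (cycle_search_step adj k) [0..<k] None))"
  proof (rule foldM_preserves)
    fix b s
    assume J: "?J b"
    define d where "d = fst (fst (dijkstra_tm adj k s))"
    have d: "length d = k" "dists_le d k" using dijkstra_tm_dists_le[of adj k s] by (auto simp: d_def)
    have "?J (fst (foldM (close_cycle_step adj s d) [0..<k] b))"
    proof (rule foldM_preserves)
      fix b' v
      assume "?J b'" and "v \<in> set [0..<k]"
      then show "?J (fst (close_cycle_step adj s d b' v))"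
        using dists_le_nth[OF d(2)] d(1) unfolding close_cycle_step_def by (auto split: option.split)
    qed (rule J)
    then show "?J (fst (cycle_search_step adj k b s))"
      unfolding cycle_search_step_def d_def by (simp add: split_beta)
  qed simp
  then show ?thesis using assms by blast
qed

lemma trace_back_length_cost:
  "length (snd (fst (foldM (trace_back_step pred) xs (v, [v])))) = Suc (length xs) \<and>
   snd (foldM (trace_back_step pred) xs (v, [v])) \<le> 2 * length xs"
proof
  have "(\<lambda>st i. length (snd st) = Suc i) (fst (foldM (trace_back_step pred) xs (v, [v]))) (0 + length xs)"
    by (rule foldM_invariant) (auto simp: trace_back_step_def split_beta)
  then show "length (snd (fst (foldM (trace_back_step pred) xs (v, [v])))) = Suc (length xs)" by simp
  show "snd (foldM (trace_back_step pred) xs (v, [v])) \<le> 2 * length xs"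
    using snd_foldM_le[of xs "trace_back_step pred" 1 "(v, [v])"] by (simp add: trace_back_step_def split_beta)
qed

lemma cycle_tm_length_cost:
  "length (fst (cycle_tm adj k)) \<le> 2 * k \<and> snd (cycle_tm adj k) \<le> k * (k * (4 * k + 14) + 11)"
proof -
  define best where "best = fst (foldM (cycle_search_step adj k) [0..<k] None)"
  have search: "snd (foldM (cycle_search_step adj k) [0..<k] None) \<le> k * (k * (4 * k + 10) + 1)"
    using snd_foldM_le[of "[0..<k]" "cycle_search_step adj k" "k * (4 * k + 10)" None]
      snd_cycle_search_step_le by simp
  show ?thesis
  proof (cases best)
    case None
    then show ?thesis using search unfolding cycle_tm_unfold
      by (simp add: best_def[symmetric] algebra_simps)
  next
    case (Some t)
    then obtain L s v where best: "best = Some (L, s, v)" by (cases t) auto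
    with cycle_search_result have "v < k" "L \<le> k + 1" unfolding best_def by blast+
    then have "length [0..<L - 1] \<le> k" "1 \<le> k" by simp_all
    define pred where "pred = snd (fst (dijkstra_tm adj k s))"
    have trace: "length (snd (fst (foldM (trace_back_step pred) [0..<L - 1] (v, [v])))) \<le> 2 * k"
      "snd (foldM (trace_back_step pred) [0..<L - 1] (v, [v])) \<le> 2 * k"
      using trace_back_length_cost[of pred "[0..<L - 1]" v] \<open>length [0..<L - 1] \<le> k\<close> \<open>1 \<le> k\<close>
      by linarith+
    show ?thesis
      using search snd_dijkstra_tm_le[of adj k s] trace unfolding cycle_tm_unfold
      by (simp add: best_def[symmetric] best split_beta pred_def[symmetric] algebra_simps)
  qed
qed

lemma egrmr_cost_le: "egrmr_cost P X eps \<le> 53 * (length X + length P) ^ 3"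
proof -
  define N where "N = length X + length P"
  define T where "T = fst (fst (step1 P X eps))"
  define S where "S = snd (fst (step1 P X eps))"
  define k where "k = length S"
  define row where "row = (\<lambda>i. forM (\<lambda>j. edge_tm T S eps i j) [0..<k])"
  define adj where "adj = fst (forM row [0..<k])"
  define C where "C = fst (cycle_tm adj k)"
  have cost: "egrmr_cost P X eps = snd (step1 P X eps) + snd (forM row [0..<k]) + snd (cycle_tm adj k)
      + snd (forM (\<lambda>i. prim (S ! i)) C)"
    unfolding egrmr_cost_def egrmr_def
    by (simp add: split_beta Let_def T_def[symmetric] S_def[symmetric] k_def[symmetric] row_def[symmetric]
        adj_def[symmetric] C_def[symmetric] del: fst_forM)
  have T: "length T \<le> N" and k: "k \<le> N" and step1: "snd (step1 P X eps) \<le> N * (6 * N + 5)"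
    using step1_length_cost[of P X eps] unfolding T_def k_def S_def N_def by simp_all
  have "snd (row i) \<le> k * (3 * length T + 5)" for i
    using snd_forM_le[of "[0..<k]" "edge_tm T S eps i" "3 * length T + 4"] snd_edge_tm_le
    unfolding row_def by (simp add: algebra_simps)
  then have "snd (forM row [0..<k]) \<le> k * (k * (3 * length T + 5) + 1)"
    using snd_forM_le[of "[0..<k]" row] by simp
  also have "\<dots> \<le> N * (N * (3 * N + 5) + 1)"
    using T k by (intro mult_le_mono add_mono) auto
  finally have rows: "snd (forM row [0..<k]) \<le> N * (N * (3 * N + 5) + 1)" .
  have cycle: "length C \<le> 2 * k" "snd (cycle_tm adj k) \<le> k * (k * (4 * k + 14) + 11)"
    using cycle_tm_length_cost[of adj k] unfolding C_def by simp_all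
  have "k * (k * (4 * k + 14) + 11) \<le> N * (N * (4 * N + 14) + 11)"
    using k by (intro mult_le_mono add_mono) auto
  with cycle have "snd (cycle_tm adj k) \<le> N * (N * (4 * N + 14) + 11)" by linarith
  moreover have "snd (forM (\<lambda>i. prim (S ! i)) C) \<le> 4 * N"
    using snd_forM_le[of C "\<lambda>i. prim (S ! i)" 1] cycle(1) k by simp
  ultimately have "egrmr_cost P X eps \<le> 7 * (N * N * N) + 25 * (N * N) + 21 * N"
    using step1 rows unfolding cost by (simp add: algebra_simps)
  also have "\<dots> \<le> 53 * (N * N * N)"
  proof -
    have "N \<le> N * N * N" and "N * N \<le> N * N * N"
      using le_cube[of N] mult_le_mono1[OF le_square[of N], of N] by (simp_all add: mult.assoc)
    then show ?thesis by linarith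
  qed
  finally show ?thesis by (simp add: N_def power3_eq_cube)
qed

lemma length_le_if_extreme_points:
  assumes "distinct X" and "set X = {p. p extreme_point_of (convex hull (set P))}"
  shows "length X \<le> length P"
proof -
  have "set X \<subseteq> set P" using assms(2) extreme_point_of_convex_hull by blast
  then show ?thesis
    using distinct_card[OF assms(1)] card_mono[of "set P" "set X"] card_length[of P] by simp
qed

theorem theorem3:
  "\<exists>C::real. \<forall>(P::complex list) (X::complex list) (eps::real).
     distinct P \<longrightarrow> standing_condition (set P) \<longrightarrow>
     distinct X \<longrightarrow> set X = {p. p extreme_point_of (convex hull (set P))} \<longrightarrow>
     0 < eps \<longrightarrow> eps < 1 \<longrightarrow>
     real (egrmr_cost P X eps) \<le> C * real (length P) ^ 3"
proof (intro exI allI impI)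
  fix P X :: "complex list" and eps :: real
  assume "distinct X" and "set X = {p. p extreme_point_of (convex hull (set P))}"
  then have "length X + length P \<le> 2 * length P"
    using length_le_if_extreme_points by fastforce
  then have "53 * (length X + length P) ^ 3 \<le> 53 * (2 * length P) ^ 3"
    by (intro mult_le_mono power_mono) auto
  then have "egrmr_cost P X eps \<le> 53 * (2 * length P) ^ 3"
    using egrmr_cost_le[of P X eps] by linarith
  then have "real (egrmr_cost P X eps) \<le> real (53 * (2 * length P) ^ 3)"
    by (simp only: of_nat_le_iff)
  then show "real (egrmr_cost P X eps) \<le> 424 * real (length P) ^ 3"
    by (simp add: power_mult_distrib)
qed

end
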